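(* Let $a,b,c$ be real numbers with $0<a,b<+\infty$ and $a+b<c<a+b+1$, and let $w\in(0,1)$. Define $$P(a,b,c):=F(a,b,c;1)=\frac{\Gamma(c)\Gamma(c-a-b)}{\Gamma(c-a)\Gamma(c-b)},\qquad Q(a,b,c):=\frac{\Gamma(c)\Gamma(a+b+1-c)}{(c-a-b)\Gamma(a)\Gamma(b)}.$$ Then $$0<P(a,b,c)-1<\frac{P(a,b,c)-F(a,b,c;w)}{(1-w)^{c-a-b}}<Q(a,b,c).$$
   Context: $F(\alpha,\beta,\gamma;w)$ denotes the Gauss hypergeometric function ${}_2F_1$ and $\Gamma$ the Gamma function. *)

theory Defs
  imports "HOL-Analysis.Analysis"
begin

definition hyp2F1 :: "real \<Rightarrow> real \<Rightarrow> real \<Rightarrow> real \<Rightarrow> real" where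
  "hyp2F1 a b c w = (\<Sum>n. pochhammer a n * pochhammer b n / (pochhammer c n * fact n) * w ^ n)"

definition P_abc :: "real \<Rightarrow> real \<Rightarrow> real \<Rightarrow> real" where
  "P_abc a b c = Gamma c * Gamma (c - a - b) / (Gamma (c - a) * Gamma (c - b))"

definition Q_abc :: "real \<Rightarrow> real \<Rightarrow> real \<Rightarrow> real" where
  "Q_abc a b c = Gamma c * Gamma (a + b + 1 - c) / ((c - a - b) * Gamma a * Gamma b)"

end

theory Submission
  imports Defs
begin

(*
  Let A n = (a)_n (b)_n / ((c)_n n!) be the coefficients of F(a,b,c;w), R k = sum_{n>k} A n the
  tails of the series at w = 1, and e k = (r)_k / k! with r = a + b + 1 - c the coefficients of
  (1 - w)^(-r). By Gauss's theorem sum A n = P, so P - F(w) = (1 - w) sum_k R k w^k, while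
  (1 - w)^(c-a-b) = (1 - w) sum_k e k w^k. Both inequalities therefore follow from the termwise
  bounds (P - 1) e k <= R k < Q e k, the left one strict for k >= 1.

  Left bound: R k / e k is strictly increasing, since (k+1) R (k+1) - (r+k) R k equals
  s R m - (m - s) A m at m = k + 1 (s = c - a - b), and this quantity decreases strictly to 0.
  Right bound: Q e k - R k decreases strictly to 0, because A (k+1) < Q (e k - e (k+1)); after
  expressing both sides by Gamma values this is the strict log-convexity inequality
  Gamma(a+k+1) Gamma(b+k+1) < Gamma(c+k+1) Gamma(r+k).
*)

lemma pochhammer_mono:
  fixes x y :: real
  assumes "0 \<le> x" "x \<le> y"
  shows "pochhammer x n \<le> pochhammer y n"
  unfolding pochhammer_prod using assms by (intro prod_mono) auto

lemma pochhammer_ratio_asymp: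
  fixes x y :: real
  assumes "0 < x" "0 < y"
  shows "(\<lambda>n. pochhammer x n / pochhammer y n * real n powr (y - x)) \<longlonglongrightarrow> Gamma y / Gamma x"
proof -
  have "(\<lambda>n. Gamma_series' y n / Gamma_series' x n) \<longlonglongrightarrow> Gamma y / Gamma x"
    using assms by (intro tendsto_intros Gamma_series'_LIMSEQ) (simp add: Gamma_real_pos less_imp_neq[symmetric])
  moreover have "\<forall>\<^sub>F n in sequentially.
      Gamma_series' y n / Gamma_series' x n = pochhammer x n / pochhammer y n * real n powr (y - x)"
  proof (rule eventually_sequentiallyI[of 1])
    fix n :: nat assume "1 \<le> n"
    moreover have "pochhammer x n > 0" "pochhammer y n > 0"
      using assms by (simp_all add: pochhammer_pos)
    ultimately show "Gamma_series' y n / Gamma_series' x n = pochhammer x n / pochhammer y n * real n powr (y - x)"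
      by (simp add: Gamma_series'_def powr_def exp_diff left_diff_distrib)
  qed
  ultimately show ?thesis
    by (rule Lim_transform_eventually)
qed

lemma pochhammer_product_ratio_LIMSEQ:
  fixes x y u v :: real
  assumes "0 < x" "0 < y" "0 < u" "0 < v" "x + y = u + v"
  shows "(\<lambda>n. pochhammer u n * pochhammer v n / (pochhammer x n * pochhammer y n))
           \<longlonglongrightarrow> Gamma x * Gamma y / (Gamma u * Gamma v)"
proof -
  have "(\<lambda>n. (pochhammer u n / pochhammer x n * real n powr (x - u))
            * (pochhammer v n / pochhammer y n * real n powr (y - v)))
          \<longlonglongrightarrow> Gamma x * Gamma y / (Gamma u * Gamma v)"
    using tendsto_mult[OF pochhammer_ratio_asymp[of u x] pochhammer_ratio_asymp[of v y]] assms
    by simp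
  moreover have "\<forall>\<^sub>F n in sequentially. (pochhammer u n / pochhammer x n * real n powr (x - u))
            * (pochhammer v n / pochhammer y n * real n powr (y - v))
         = pochhammer u n * pochhammer v n / (pochhammer x n * pochhammer y n)"
  proof (rule eventually_sequentiallyI[of 1])
    fix n :: nat assume "1 \<le> n"
    moreover have "x - u + (y - v) = 0" using assms(5) by simp
    ultimately have "real n powr (x - u) * real n powr (y - v) = 1"
      by (simp flip: powr_add)
    then show "(pochhammer u n / pochhammer x n * real n powr (x - u))
            * (pochhammer v n / pochhammer y n * real n powr (y - v))
         = pochhammer u n * pochhammer v n / (pochhammer x n * pochhammer y n)"
      by (simp add: field_simps)
  qed
  ultimately show ?thesis
    by (rule Lim_transform_eventually)
qed

text \<open>The Pochhammer quotients converging to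
  \<open>\<Gamma>(x)\<Gamma>(y)/(\<Gamma>(u)\<Gamma>(v))\<close> decrease, and the first nontrivial one is \<open>uv/(xy) < 1\<close>.\<close>

lemma Gamma_mult_less:
  fixes x y u v :: real
  assumes "0 < v" "v < x" "v < y" "x + y = u + v"
  shows "Gamma x * Gamma y < Gamma u * Gamma v"
proof -
  have pos: "0 < x" "0 < y" "0 < u" using assms by auto
  define q where "q n = pochhammer u n * pochhammer v n / (pochhammer x n * pochhammer y n)" for n
  have factor_less: "(u + k) * (v + k) < (x + k) * (y + k)" for k :: real
  proof -
    have u: "u = x + y - v" using assms(4) by simp
    have "(x + k) * (y + k) - (u + k) * (v + k) = (x - v) * (y - v)"
      unfolding u by (simp add: algebra_simps)
    also have "\<dots> > 0" using assms by simp
    finally show ?thesis by simp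
  qed
  have q_Suc: "q (Suc n) = q n * ((u + n) * (v + n) / ((x + n) * (y + n)))" for n
    by (simp add: q_def pochhammer_Suc ac_simps)
  have "decseq q"
  proof (rule decseq_SucI)
    fix n :: nat
    have "(u + n) * (v + n) / ((x + n) * (y + n)) \<le> 1"
    proof -
      have "0 < (x + n) * (y + n)" using pos by simp
      then show ?thesis using factor_less[of n] by simp
    qed
    moreover have "0 \<le> q n" using pos assms(1) by (simp add: q_def pochhammer_pos less_imp_le)
    ultimately show "q (Suc n) \<le> q n"
      unfolding q_Suc by (rule mult_left_le)
  qed
  moreover have "q \<longlonglongrightarrow> Gamma x * Gamma y / (Gamma u * Gamma v)"
    unfolding q_def using pos assms by (intro pochhammer_product_ratio_LIMSEQ) auto
  ultimately have "Gamma x * Gamma y / (Gamma u * Gamma v) \<le> q 1"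
    by (rule decseq_ge)
  also have "q 1 < 1"
    using factor_less[of 0] pos assms(1) by (simp add: q_def)
  finally show ?thesis
    using pos assms(1) by (simp add: Gamma_real_pos divide_less_eq)
qed

lemma summable_if_powr_asymp:
  fixes f :: "nat \<Rightarrow> real"
  assumes lim: "(\<lambda>n. f n * real n powr p) \<longlonglongrightarrow> L" and "1 < p"
  shows "summable f"
proof -
  obtain B where B: "\<forall>n. norm (f n * real n powr p) \<le> B"
    using BseqE[OF convergent_imp_Bseq[OF convergentI[OF lim]]] by blast
  have bound: "norm (f n) \<le> B * real n powr (- p)" if "1 \<le> n" for n
  proof -
    have "norm (f n) = norm (f n * real n powr p) * real n powr (- p)"
      using that by (simp add: abs_mult powr_minus)
    also have "\<dots> \<le> B * real n powr (- p)"
      using B by (simp add: mult_right_mono)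
    finally show ?thesis .
  qed
  have "summable (\<lambda>n. B * real n powr (- p))"
    using assms(2) by (intro summable_mult) (simp add: summable_real_powr_iff)
  then show ?thesis
    by (rule summable_comparison_test'[OF _ bound])
qed

lemma LIMSEQ_n_mult_0_if_powr_asymp:
  fixes f :: "nat \<Rightarrow> real"
  assumes lim: "(\<lambda>n. f n * real n powr p) \<longlonglongrightarrow> L" and "1 < p"
  shows "(\<lambda>n. real n * f n) \<longlonglongrightarrow> 0"
proof -
  have "(\<lambda>n. f n * real n powr p * real n powr (1 - p)) \<longlonglongrightarrow> L * 0"
    using assms(2) by (intro tendsto_mult lim tendsto_neg_powr filterlim_real_sequentially) auto
  moreover have "\<forall>\<^sub>F n in sequentially. f n * real n powr p * real n powr (1 - p) = real n * f n"
    by (rule eventually_sequentiallyI[of 1]) (simp flip: powr_add)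
  ultimately show ?thesis
    by (simp add: Lim_transform_eventually)
qed

lemma sums_less:
  fixes f g :: "nat \<Rightarrow> real"
  assumes "\<And>n. f n \<le> g n" "f i < g i" "f sums s" "g sums t"
  shows "s < t"
proof -
  have "(\<lambda>n. g n - f n) sums (t - s)"
    using assms(3,4) by (rule sums_diff[rotated])
  moreover have "0 < (\<Sum>n. g n - f n)"
    using assms(1,2) calculation by (intro suminf_pos2[where i = i]) (auto simp: sums_iff)
  ultimately show ?thesis
    by (simp add: sums_iff)
qed

lemma pos_if_strict_dec_LIMSEQ_0:
  fixes f :: "nat \<Rightarrow> real"
  assumes "\<And>n. f (Suc n) < f n" "f \<longlonglongrightarrow> 0"
  shows "0 < f n"
proof -
  have "decseq f"
    using assms(1) by (intro decseq_SucI less_imp_le)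
  then have "0 \<le> f (Suc n)"
    using assms(2) by (rule decseq_ge)
  then show ?thesis
    using assms(1)[of n] by simp
qed

definition series_tail :: "(nat \<Rightarrow> real) \<Rightarrow> nat \<Rightarrow> real" where
  "series_tail f k = (\<Sum>n. f (n + Suc k))"

lemma series_tail_eq:
  "summable f \<Longrightarrow> series_tail f k = suminf f - (\<Sum>i\<le>k. f i)"
  using suminf_minus_initial_segment[of f "Suc k"] by (simp add: series_tail_def lessThan_Suc_atMost)

lemma series_tail_0: "summable f \<Longrightarrow> series_tail f 0 = suminf f - f 0"
  by (simp add: series_tail_eq)

lemma series_tail_Suc: "summable f \<Longrightarrow> series_tail f k = f (Suc k) + series_tail f (Suc k)"
  by (simp add: series_tail_eq)

lemma series_tail_LIMSEQ:
  assumes "summable f"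
  shows "series_tail f \<longlonglongrightarrow> 0"
proof -
  have "(\<lambda>k. \<Sum>i<Suc k. f i) \<longlonglongrightarrow> suminf f"
    using LIMSEQ_Suc[OF summable_LIMSEQ[OF assms]] .
  then have "(\<lambda>k. suminf f - (\<Sum>i<Suc k. f i)) \<longlonglongrightarrow> suminf f - suminf f"
    by (intro tendsto_diff tendsto_const)
  moreover have "series_tail f = (\<lambda>k. suminf f - (\<Sum>i<Suc k. f i))"
    using assms by (simp add: fun_eq_iff series_tail_eq lessThan_Suc_atMost)
  ultimately show ?thesis
    by simp
qed

lemma series_tail_pos:
  assumes "summable f" "\<And>n. 0 < f n"
  shows "0 < series_tail f k"
  unfolding series_tail_def using assms by (intro suminf_pos summable_ignore_initial_segment)

lemma summable_series_tail_power:
  fixes f :: "nat \<Rightarrow> real"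
  assumes f: "summable f" and w: "\<bar>w\<bar> < 1"
  shows "summable (\<lambda>k. series_tail f k * w ^ k)"
proof -
  let ?R = "series_tail f"
  obtain B where B: "\<forall>k. norm (?R k) \<le> B"
    using BseqE[OF convergent_imp_Bseq[OF convergentI[OF series_tail_LIMSEQ[OF f]]]] by blast
  have bound: "norm (?R k * w ^ k) \<le> B * \<bar>w\<bar> ^ k" for k
  proof -
    have "norm (?R k * w ^ k) = norm (?R k) * \<bar>w\<bar> ^ k"
      by (simp add: abs_mult power_abs)
    also have "\<dots> \<le> B * \<bar>w\<bar> ^ k"
      using B by (intro mult_right_mono) auto
    finally show ?thesis .
  qed
  have "summable (\<lambda>k. B * \<bar>w\<bar> ^ k)"
    using w by (intro summable_mult summable_geometric) simp
  then show ?thesis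
    by (rule summable_comparison_test'[where N = 0]) (rule bound)
qed

lemma suminf_minus_power_series_eq:
  fixes f :: "nat \<Rightarrow> real"
  assumes f: "summable f" and w: "\<bar>w\<bar> < 1"
  shows "suminf f - (\<Sum>n. f n * w ^ n) = (1 - w) * (\<Sum>k. series_tail f k * w ^ k)"
proof -
  let ?R = "series_tail f"
  have summable_R: "summable (\<lambda>k. ?R k * w ^ k)"
    using f w by (rule summable_series_tail_power)
  have "summable (\<lambda>n. f n * 1 ^ n)"
    using f by simp
  with w have summable_F: "summable (\<lambda>n. f n * w ^ n)"
    by (intro powser_inside[of f 1 w]) simp_all
  define X where "X = (\<Sum>k. ?R k * w ^ k)"
  have "(\<lambda>k. w * (?R k * w ^ k)) sums (w * X)"
    unfolding X_def by (intro sums_mult summable_sums summable_R)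
  moreover have "(\<lambda>k. f (Suc k) * w ^ Suc k) sums ((\<Sum>n. f n * w ^ n) - f 0)"
    using summable_sums[OF summable_F] sums_Suc_iff[of "\<lambda>n. f n * w ^ n"] by simp
  ultimately have "(\<lambda>k. w * (?R k * w ^ k) - f (Suc k) * w ^ Suc k) sums (w * X - ((\<Sum>n. f n * w ^ n) - f 0))"
    by (rule sums_diff)
  moreover have "w * (?R k * w ^ k) - f (Suc k) * w ^ Suc k = ?R (Suc k) * w ^ Suc k" for k
    using series_tail_Suc[OF f, of k] by (simp add: algebra_simps)
  ultimately have "(\<lambda>k. ?R (Suc k) * w ^ Suc k) sums (w * X - ((\<Sum>n. f n * w ^ n) - f 0))"
    by simp
  then have "(\<lambda>k. ?R k * w ^ k) sums (w * X - ((\<Sum>n. f n * w ^ n) - f 0) + ?R 0)"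
    using sums_Suc_iff[of "\<lambda>k. ?R k * w ^ k"] by simp
  then have "X = w * X - ((\<Sum>n. f n * w ^ n) - f 0) + ?R 0"
    unfolding X_def by (rule sums_unique[symmetric])
  then show ?thesis
    using f by (simp add: X_def series_tail_0 algebra_simps)
qed

definition neg_binomial_coeff :: "real \<Rightarrow> nat \<Rightarrow> real" where
  "neg_binomial_coeff r k = pochhammer r k / fact k"

lemma neg_binomial_coeff_0 [simp]: "neg_binomial_coeff r 0 = 1"
  by (simp add: neg_binomial_coeff_def)

lemma neg_binomial_coeff_pos: "0 < r \<Longrightarrow> 0 < neg_binomial_coeff r k"
  by (simp add: neg_binomial_coeff_def pochhammer_pos)

lemma neg_binomial_coeff_Suc:
  "real (Suc k) * neg_binomial_coeff r (Suc k) = (r + k) * neg_binomial_coeff r k"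
  by (simp add: neg_binomial_coeff_def pochhammer_Suc del: of_nat_Suc)

lemma neg_binomial_coeff_LIMSEQ:
  assumes "0 < r" "r < 1"
  shows "neg_binomial_coeff r \<longlonglongrightarrow> 0"
proof -
  have "(\<lambda>k. pochhammer r k / pochhammer 1 k * real k powr (1 - r) * real k powr (r - 1))
          \<longlonglongrightarrow> Gamma 1 / Gamma r * 0"
    using assms
    by (intro tendsto_mult pochhammer_ratio_asymp tendsto_neg_powr filterlim_real_sequentially) auto
  moreover have "\<forall>\<^sub>F k in sequentially.
      pochhammer r k / pochhammer 1 k * real k powr (1 - r) * real k powr (r - 1) = neg_binomial_coeff r k"
    by (rule eventually_sequentiallyI[of 1])
       (simp add: neg_binomial_coeff_def pochhammer_fact mult.assoc flip: powr_add)
  ultimately show ?thesis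
    by (simp add: Lim_transform_eventually)
qed

lemma neg_binomial_series:
  assumes "\<bar>w\<bar> < 1"
  shows "(\<lambda>k. neg_binomial_coeff r k * w ^ k) sums (1 - w) powr (- r)"
proof -
  have "(\<lambda>k. (- r gchoose k) * (- w) ^ k) sums (1 + - w) powr (- r)"
    using assms by (intro gen_binomial_real) simp
  moreover have "(- r gchoose k) * (- w) ^ k = neg_binomial_coeff r k * w ^ k" for k
  proof -
    have "(-1::real) ^ k * (-1) ^ k = 1"
      by (simp flip: power_mult_distrib)
    then show ?thesis
      by (simp add: gbinomial_pochhammer neg_binomial_coeff_def power_minus[of w] field_simps)
  qed
  ultimately show ?thesis
    by simp
qed

definition hyp2F1_coeff :: "real \<Rightarrow> real \<Rightarrow> real \<Rightarrow> nat \<Rightarrow> real" where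
  "hyp2F1_coeff a b c n = pochhammer a n * pochhammer b n / (pochhammer c n * fact n)"

lemma hyp2F1_eq_suminf: "hyp2F1 a b c w = (\<Sum>n. hyp2F1_coeff a b c n * w ^ n)"
  by (simp add: hyp2F1_def hyp2F1_coeff_def)

lemma hyp2F1_coeff_0 [simp]: "hyp2F1_coeff a b c 0 = 1"
  by (simp add: hyp2F1_coeff_def)

lemma hyp2F1_coeff_pos: "0 < a \<Longrightarrow> 0 < b \<Longrightarrow> 0 < c \<Longrightarrow> 0 < hyp2F1_coeff a b c n"
  by (simp add: hyp2F1_coeff_def pochhammer_pos)

lemma hyp2F1_coeff_Suc:
  "real (Suc n) * hyp2F1_coeff a b c (Suc n) = (a + n) * (b + n) / (c + n) * hyp2F1_coeff a b c n"
proof -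
  have "real (Suc n) * hyp2F1_coeff a b c (Suc n)
          = pochhammer a (Suc n) * pochhammer b (Suc n) / (pochhammer c (Suc n) * fact n)"
    by (simp add: hyp2F1_coeff_def del: of_nat_Suc)
  also have "\<dots> = (a + n) * (b + n) / (c + n) * hyp2F1_coeff a b c n"
    by (simp add: hyp2F1_coeff_def pochhammer_Suc ac_simps)
  finally show ?thesis .
qed

lemma hyp2F1_coeff_plus_1:
  assumes "0 < c"
  shows "hyp2F1_coeff a b (c + 1) n = c / (c + n) * hyp2F1_coeff a b c n"
proof -
  have "pochhammer c n * (c + n) = c * pochhammer (c + 1) n"
    using pochhammer_rec[of c n] pochhammer_Suc[of c n] by simp
  then show ?thesis
    using assms by (simp add: hyp2F1_coeff_def pochhammer_pos field_simps)
qed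

lemma hyp2F1_coeff_le_shift:
  assumes "0 < a" "0 < b" "0 < c" "0 \<le> m" "1 \<le> n"
  shows "hyp2F1_coeff a b (c + m) n \<le> c / (c + m) * hyp2F1_coeff a b c n"
proof -
  obtain k where n: "n = Suc k" using assms(5) by (cases n) auto
  have "pochhammer c n * (c + m) = c * (c + m) * pochhammer (c + 1) k"
    unfolding n pochhammer_rec by simp
  also have "\<dots> \<le> c * (c + m) * pochhammer (c + m + 1) k"
    using assms by (intro mult_left_mono pochhammer_mono) auto
  also have "\<dots> = c * pochhammer (c + m) n"
    unfolding n pochhammer_rec by simp
  finally have "pochhammer c n * (c + m) \<le> c * pochhammer (c + m) n" .
  then have "pochhammer c n * (c + m) / c \<le> pochhammer (c + m) n"
    using assms by (simp add: field_simps)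
  moreover have "0 < pochhammer c n" "0 < pochhammer (c + m) n" "0 \<le> pochhammer a n * pochhammer b n / fact n"
    using assms by (simp_all add: pochhammer_pos less_imp_le)
  ultimately have "pochhammer a n * pochhammer b n / fact n / pochhammer (c + m) n
      \<le> pochhammer a n * pochhammer b n / fact n / (pochhammer c n * (c + m) / c)"
    using assms by (intro divide_left_mono) auto
  then show ?thesis
    using assms by (simp add: hyp2F1_coeff_def field_simps)
qed

lemma hyp2F1_coeff_asymp:
  assumes "0 < a" "0 < b" "0 < c"
  shows "(\<lambda>n. hyp2F1_coeff a b c n * real n powr (c + 1 - a - b)) \<longlonglongrightarrow> Gamma c / (Gamma a * Gamma b)"
proof -
  have "(\<lambda>n. (pochhammer a n / pochhammer c n * real n powr (c - a))
            * (pochhammer b n / pochhammer 1 n * real n powr (1 - b)))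
          \<longlonglongrightarrow> Gamma c / Gamma a * (Gamma 1 / Gamma b)"
    using assms by (intro tendsto_mult pochhammer_ratio_asymp) auto
  moreover have "(pochhammer a n / pochhammer c n * real n powr (c - a))
            * (pochhammer b n / pochhammer 1 n * real n powr (1 - b))
         = hyp2F1_coeff a b c n * real n powr (c + 1 - a - b)" for n
  proof -
    have "c + 1 - a - b = (c - a) + (1 - b)" by simp
    then have "real n powr (c + 1 - a - b) = real n powr (c - a) * real n powr (1 - b)"
      by (simp only: powr_add)
    then show ?thesis
      by (simp add: hyp2F1_coeff_def pochhammer_fact)
  qed
  ultimately show ?thesis by simp
qed

lemma summable_hyp2F1_coeff:
  assumes "0 < a" "0 < b" "a + b < c"
  shows "summable (hyp2F1_coeff a b c)"
  using assms by (intro summable_if_powr_asymp[OF hyp2F1_coeff_asymp]) auto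

lemma hyp2F1_coeff_times_n_LIMSEQ:
  assumes "0 < a" "0 < b" "a + b < c"
  shows "(\<lambda>n. real n * hyp2F1_coeff a b c n) \<longlonglongrightarrow> 0"
  using assms by (intro LIMSEQ_n_mult_0_if_powr_asymp[OF hyp2F1_coeff_asymp]) auto

lemma hyp2F1_contiguous_at_1:
  assumes "0 < a" "0 < b" "a + b < c"
  shows "c * (c - a - b) * suminf (hyp2F1_coeff a b c)
           = (c - a) * (c - b) * suminf (hyp2F1_coeff a b (c + 1))"
proof -
  have c: "0 < c" using assms by simp
  define f where "f n = c * (real n * hyp2F1_coeff a b c n)" for n
  define g where "g n = c * (c - a - b) * hyp2F1_coeff a b c n - (c - a) * (c - b) * hyp2F1_coeff a b (c + 1) n"
    for n
  have "f \<longlonglongrightarrow> c * 0"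
    unfolding f_def using assms by (intro tendsto_mult tendsto_const hyp2F1_coeff_times_n_LIMSEQ)
  then have "(\<lambda>n. f n - f (Suc n)) sums (f 0 - 0)"
    by (intro telescope_sums') simp
  moreover have "f n - f (Suc n) = g n" for n
  proof -
    have cn: "0 < c + n" using c by simp
    have "f (Suc n) = c * ((a + n) * (b + n) / (c + n) * hyp2F1_coeff a b c n)"
      unfolding f_def hyp2F1_coeff_Suc ..
    moreover have "(c - a - b) * (c + n) - (c - a) * (c - b) = n * (c + n) - (a + n) * (b + n)"
      by (simp add: algebra_simps)
    ultimately show ?thesis
      using cn unfolding hyp2F1_coeff_plus_1[OF c] f_def g_def by (simp add: field_simps)
  qed
  ultimately have "g sums 0"
    by (simp add: f_def)
  moreover have "g sums (c * (c - a - b) * suminf (hyp2F1_coeff a b c)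
                          - (c - a) * (c - b) * suminf (hyp2F1_coeff a b (c + 1)))"
    unfolding g_def using assms by (intro sums_diff sums_mult summable_sums summable_hyp2F1_coeff) auto
  ultimately show ?thesis
    using sums_unique2 by fastforce
qed

lemma suminf_hyp2F1_coeff_shift_LIMSEQ:
  assumes "0 < a" "0 < b" "a + b < c"
  shows "(\<lambda>m. suminf (hyp2F1_coeff a b (c + real m))) \<longlonglongrightarrow> 1"
proof -
  have summable: "summable (hyp2F1_coeff a b (c + real m))" for m
    using assms by (intro summable_hyp2F1_coeff) auto
  define T where "T m = suminf (hyp2F1_coeff a b (c + real m)) - 1" for m
  have T_eq: "T m = (\<Sum>n. hyp2F1_coeff a b (c + real m) (Suc n))" for m
    unfolding T_def suminf_split_head[OF summable] by simp
  have upper: "T m \<le> c / (c + real m) * T 0" for m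
  proof -
    have "T m \<le> (\<Sum>n. c / (c + real m) * hyp2F1_coeff a b c (Suc n))"
      unfolding T_eq using summable[of m] summable[of 0] assms
      by (intro suminf_le hyp2F1_coeff_le_shift summable_mult) (auto simp: summable_Suc_iff)
    also have "\<dots> = c / (c + real m) * T 0"
    proof -
      have "summable (\<lambda>n. hyp2F1_coeff a b c (Suc n))"
        using summable[of 0] by (simp add: summable_Suc_iff)
      moreover have "T 0 = (\<Sum>n. hyp2F1_coeff a b c (Suc n))"
        by (simp add: T_eq)
      ultimately show ?thesis
        by (simp only: suminf_mult)
    qed
    finally show ?thesis .
  qed
  have lower: "0 \<le> T m" for m
    unfolding T_eq using summable[of m] assms
    by (intro suminf_nonneg less_imp_le hyp2F1_coeff_pos) (auto simp: summable_Suc_iff)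
  have bound_LIMSEQ: "(\<lambda>m. c / (c + real m) * T 0) \<longlonglongrightarrow> 0"
  proof -
    have "(\<lambda>m. c * inverse (c + real m) * T 0) \<longlonglongrightarrow> c * 0 * T 0"
      by (intro tendsto_intros tendsto_inverse_0_at_top
          filterlim_tendsto_add_at_top[OF tendsto_const filterlim_real_sequentially])
    then show ?thesis by (simp add: divide_inverse)
  qed
  have "T \<longlonglongrightarrow> 0"
  proof (rule tendsto_sandwich[OF _ _ tendsto_const bound_LIMSEQ])
    show "\<forall>\<^sub>F m in sequentially. 0 \<le> T m"
      using lower by simp
    show "\<forall>\<^sub>F m in sequentially. T m \<le> c / (c + real m) * T 0"
      using upper by simp
  qed
  then have "(\<lambda>m. T m + 1) \<longlonglongrightarrow> 0 + 1"
    by (intro tendsto_add tendsto_const)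
  then show ?thesis by (simp add: T_def)
qed

text \<open>The contiguous relation gives \<open>F(c) = q\<^sub>m F(c + m)\<close> with
  \<open>q\<^sub>m \<longlonglongrightarrow> P\<close> by the Pochhammer asymptotics, while \<open>F(c + m) \<longlonglongrightarrow> 1\<close>.\<close>

lemma hyp2F1_coeff_sums_P_abc:
  assumes "0 < a" "0 < b" "a + b < c"
  shows "hyp2F1_coeff a b c sums P_abc a b c"
proof -
  define S where "S x = suminf (hyp2F1_coeff a b x)" for x
  define q where "q m = pochhammer (c - a) m * pochhammer (c - b) m
                          / (pochhammer c m * pochhammer (c - a - b) m)" for m
  have iterate: "S c = q m * S (c + real m)" for m
  proof (induction m)
    case 0
    then show ?case by (simp add: q_def)
  next
    case (Suc m)
    have pos: "0 < c + m" "0 < c + m - a - b" "0 < pochhammer c m" "0 < pochhammer (c - a - b) m"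
      using assms by (simp_all add: pochhammer_pos)
    have "(c + m) * (c + m - a - b) * S (c + m) = (c + m - a) * (c + m - b) * S (c + m + 1)"
      unfolding S_def using assms by (intro hyp2F1_contiguous_at_1) auto
    moreover have "c + m + 1 = c + real (Suc m)" by simp
    ultimately have "S (c + m) = (c + m - a) * (c + m - b) / ((c + m) * (c + m - a - b)) * S (c + Suc m)"
      using pos by (simp add: eq_divide_eq ac_simps)
    moreover have "q (Suc m) = q m * ((c + m - a) * (c + m - b) / ((c + m) * (c + m - a - b)))"
      using pos by (simp add: q_def pochhammer_Suc field_simps)
    ultimately show ?case
      using Suc.IH by simp
  qed
  have "q \<longlonglongrightarrow> P_abc a b c"
    unfolding q_def P_abc_def using assms by (intro pochhammer_product_ratio_LIMSEQ) auto
  then have "(\<lambda>m. q m * S (c + real m)) \<longlonglongrightarrow> P_abc a b c * 1"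
    unfolding S_def using assms by (intro tendsto_mult suminf_hyp2F1_coeff_shift_LIMSEQ)
  then have "S c = P_abc a b c"
    by (simp flip: iterate add: LIMSEQ_const_iff)
  then show ?thesis
    unfolding S_def using assms by (simp add: sums_iff summable_hyp2F1_coeff)
qed

lemma hyp2F1_tail_0:
  assumes "0 < a" "0 < b" "a + b < c"
  shows "series_tail (hyp2F1_coeff a b c) 0 = P_abc a b c - 1"
  using hyp2F1_coeff_sums_P_abc[OF assms] by (simp add: series_tail_0 sums_iff)

lemma P_abc_minus_hyp2F1_eq:
  assumes "0 < a" "0 < b" "a + b < c" "\<bar>w\<bar> < 1"
  shows "P_abc a b c - hyp2F1 a b c w = (1 - w) * (\<Sum>k. series_tail (hyp2F1_coeff a b c) k * w ^ k)"
  using hyp2F1_coeff_sums_P_abc[OF assms(1-3)]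
    suminf_minus_power_series_eq[OF _ assms(4), of "hyp2F1_coeff a b c"]
  by (simp add: sums_iff hyp2F1_eq_suminf)

lemma hyp2F1_coeff_Suc_less_Q_abc:
  assumes "0 < a" "0 < b" "a + b < c" "c < a + b + 1"
  defines "e \<equiv> neg_binomial_coeff (a + b + 1 - c)"
  shows "hyp2F1_coeff a b c (Suc k) < Q_abc a b c * (e k - e (Suc k))"
proof -
  define r where "r = a + b + 1 - c"
  define K where "K = Gamma c / (Gamma a * Gamma b)"
  have r: "0 < r" "r < 1" and K: "0 < K"
    using assms by (simp_all add: r_def K_def Gamma_real_pos)
  have "Gamma (a + Suc k) * Gamma (b + Suc k) < Gamma (c + Suc k) * Gamma (r + k)"
    using assms by (intro Gamma_mult_less) (auto simp: r_def)
  moreover have "0 < Gamma (c + Suc k)"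
    using assms by (simp add: Gamma_real_pos)
  ultimately have Gamma_less: "Gamma (a + Suc k) * Gamma (b + Suc k) / Gamma (c + Suc k) < Gamma (r + k)"
    by (simp add: pos_divide_less_eq mult.commute)
  have pochhammer_eq: "pochhammer x n = Gamma (x + n) / Gamma x" if "0 < x" for x :: real and n
    using that by (intro pochhammer_Gamma) auto
  then have "hyp2F1_coeff a b c (Suc k)
          = K * (Gamma (a + Suc k) * Gamma (b + Suc k) / Gamma (c + Suc k)) / fact (Suc k)"
    using assms by (simp add: hyp2F1_coeff_def K_def Gamma_real_pos field_simps)
  also have "\<dots> < K * Gamma (r + k) / fact (Suc k)"
    using Gamma_less K by (intro divide_strict_right_mono mult_strict_left_mono) simp_all
  also have "\<dots> = Q_abc a b c * (e k - e (Suc k))"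
  proof -
    have diff: "e k - e (Suc k) = (1 - r) / real (Suc k) * e k"
      using neg_binomial_coeff_Suc[of k r] by (simp add: e_def r_def field_simps)
    have ek: "e k = Gamma (r + k) / (Gamma r * fact k)"
      using r by (simp add: e_def r_def neg_binomial_coeff_def pochhammer_eq)
    have Q: "Q_abc a b c = K * Gamma r / (1 - r)"
      by (simp add: Q_abc_def K_def r_def)
    have cancel: "K * g / t * (t / m * (G / (g * f))) = K * G / (m * f)"
      if "g \<noteq> 0" "t \<noteq> 0" for g t m f G :: real
      using that by (simp add: field_simps)
    have "Gamma r \<noteq> 0" "1 - r \<noteq> 0"
      using r by (simp_all add: Gamma_real_pos less_imp_neq[symmetric])
    then show ?thesis
      unfolding diff unfolding ek Q cancel[OF \<open>Gamma r \<noteq> 0\<close> \<open>1 - r \<noteq> 0\<close>]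
      by (simp del: of_nat_Suc)
  qed
  finally show ?thesis .
qed

lemma hyp2F1_tail_less_Q_abc:
  assumes "0 < a" "0 < b" "a + b < c" "c < a + b + 1"
  shows "series_tail (hyp2F1_coeff a b c) k < Q_abc a b c * neg_binomial_coeff (a + b + 1 - c) k"
proof -
  let ?R = "series_tail (hyp2F1_coeff a b c)" and ?e = "neg_binomial_coeff (a + b + 1 - c)"
  have summable: "summable (hyp2F1_coeff a b c)"
    using assms by (intro summable_hyp2F1_coeff)
  define E where "E k = Q_abc a b c * ?e k - ?R k" for k
  have "E (Suc k) < E k" for k
    using hyp2F1_coeff_Suc_less_Q_abc[OF assms, of k] series_tail_Suc[OF summable, of k]
    by (simp add: E_def algebra_simps)
  moreover have "E \<longlonglongrightarrow> Q_abc a b c * 0 - 0"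
    unfolding E_def using assms
    by (intro tendsto_diff tendsto_mult tendsto_const neg_binomial_coeff_LIMSEQ series_tail_LIMSEQ summable) auto
  ultimately have "0 < E k"
    by (intro pos_if_strict_dec_LIMSEQ_0) auto
  then show ?thesis
    by (simp add: E_def)
qed

lemma hyp2F1_tail_weighted_pos:
  assumes "0 < a" "0 < b" "a + b < c"
  shows "0 < (c - a - b) * series_tail (hyp2F1_coeff a b c) m - (real m - (c - a - b)) * hyp2F1_coeff a b c m"
proof -
  define s where "s = c - a - b"
  let ?A = "hyp2F1_coeff a b c"
  have summable: "summable ?A"
    using assms by (intro summable_hyp2F1_coeff)
  define \<psi> where "\<psi> m = s * series_tail ?A m - (real m - s) * ?A m" for m
  have "\<psi> (Suc m) < \<psi> m" for m
  proof -
    have "0 < c + m" using assms by simp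
    moreover have "(a + m) * (b + m) - (real m - s) * (c + m) = (c - a) * (c - b)"
      by (simp add: s_def algebra_simps)
    moreover have "0 < (c - a) * (c - b)"
      using assms by simp
    ultimately have "real m - s < (a + m) * (b + m) / (c + m)"
      by (simp add: field_simps)
    then have "(real m - s) * ?A m < real (Suc m) * ?A (Suc m)"
      unfolding hyp2F1_coeff_Suc using assms by (intro mult_strict_right_mono hyp2F1_coeff_pos) auto
    then show ?thesis
      using series_tail_Suc[OF summable, of m] by (simp add: \<psi>_def algebra_simps)
  qed
  moreover have "\<psi> \<longlonglongrightarrow> s * 0 - (0 - s * 0)"
    unfolding \<psi>_def left_diff_distrib using assms summable
    by (intro tendsto_intros series_tail_LIMSEQ hyp2F1_coeff_times_n_LIMSEQ summable_LIMSEQ_zero)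
  ultimately have "0 < \<psi> m"
    by (intro pos_if_strict_dec_LIMSEQ_0) auto
  then show ?thesis
    by (simp add: \<psi>_def s_def)
qed

lemma hyp2F1_tail_ratio_strict_mono:
  assumes "0 < a" "0 < b" "a + b < c" "c < a + b + 1"
  shows "strict_mono (\<lambda>k. series_tail (hyp2F1_coeff a b c) k / neg_binomial_coeff (a + b + 1 - c) k)"
proof (unfold strict_mono_Suc_iff, intro allI)
  fix k
  let ?r = "a + b + 1 - c"
  let ?R = "series_tail (hyp2F1_coeff a b c)" and ?e = "neg_binomial_coeff ?r"
  have summable: "summable (hyp2F1_coeff a b c)"
    using assms by (intro summable_hyp2F1_coeff)
  have pos: "0 < ?e k" "0 < ?r + k"
    using assms by (simp_all add: neg_binomial_coeff_pos)
  have "0 < (c - a - b) * ?R (Suc k) - (real (Suc k) - (c - a - b)) * hyp2F1_coeff a b c (Suc k)"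
    using assms by (intro hyp2F1_tail_weighted_pos)
  also have "\<dots> = real (Suc k) * ?R (Suc k) - (?r + k) * ?R k"
    using series_tail_Suc[OF summable, of k] by (simp add: algebra_simps)
  finally have R_less: "(?r + k) * ?R k < real (Suc k) * ?R (Suc k)"
    by simp
  have "?R k / ?e k = (?r + k) * ?R k / ((?r + k) * ?e k)"
    using pos by simp
  also have "\<dots> < real (Suc k) * ?R (Suc k) / ((?r + k) * ?e k)"
    using R_less pos by (intro divide_strict_right_mono) simp_all
  also have "\<dots> = ?R (Suc k) / ?e (Suc k)"
    by (simp only: neg_binomial_coeff_Suc[symmetric]) simp
  finally show "?R k / ?e k < ?R (Suc k) / ?e (Suc k)" .
qed

lemma hyp2F1_tail_gt:
  assumes "0 < a" "0 < b" "a + b < c" "c < a + b + 1" "0 < k"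
  shows "series_tail (hyp2F1_coeff a b c) 0 * neg_binomial_coeff (a + b + 1 - c) k
           < series_tail (hyp2F1_coeff a b c) k"
  using strict_monoD[OF hyp2F1_tail_ratio_strict_mono[OF assms(1-4)] assms(5)]
    neg_binomial_coeff_pos[of "a + b + 1 - c" k] assms(4)
  by (simp add: field_simps)

lemma hyp2F1_tail_power_series_gt:
  assumes "0 < a" "0 < b" "a + b < c" "c < a + b + 1" "0 < w" "w < 1"
  shows "(P_abc a b c - 1) * (1 - w) powr (- (a + b + 1 - c))
           < (\<Sum>k. series_tail (hyp2F1_coeff a b c) k * w ^ k)"
proof (rule sums_less[where i = 1])
  let ?R = "series_tail (hyp2F1_coeff a b c)" and ?e = "neg_binomial_coeff (a + b + 1 - c)"
  have R_ge: "?R 0 * ?e k \<le> ?R k" for k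
    using hyp2F1_tail_gt[OF assms(1-4), of k] by (cases k) (simp_all add: less_imp_le)
  show "(P_abc a b c - 1) * (?e k * w ^ k) \<le> ?R k * w ^ k" for k
    using mult_right_mono[OF R_ge, of "w ^ k" k] assms(5)
    by (simp add: hyp2F1_tail_0[OF assms(1-3), symmetric] mult.assoc)
  show "(P_abc a b c - 1) * (?e 1 * w ^ 1) < ?R 1 * w ^ 1"
    using hyp2F1_tail_gt[OF assms(1-4), of 1] assms(5)
    by (simp add: hyp2F1_tail_0[OF assms(1-3), symmetric] mult.assoc)
  show "(\<lambda>k. (P_abc a b c - 1) * (?e k * w ^ k)) sums ((P_abc a b c - 1) * (1 - w) powr (- (a + b + 1 - c)))"
    using assms(5,6) by (intro sums_mult neg_binomial_series) simp
  show "(\<lambda>k. ?R k * w ^ k) sums (\<Sum>k. ?R k * w ^ k)"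
    using assms by (intro summable_sums summable_series_tail_power summable_hyp2F1_coeff) auto
qed

lemma hyp2F1_tail_power_series_less:
  assumes "0 < a" "0 < b" "a + b < c" "c < a + b + 1" "0 < w" "w < 1"
  shows "(\<Sum>k. series_tail (hyp2F1_coeff a b c) k * w ^ k)
           < Q_abc a b c * (1 - w) powr (- (a + b + 1 - c))"
proof -
  let ?R = "series_tail (hyp2F1_coeff a b c)" and ?e = "neg_binomial_coeff (a + b + 1 - c)"
  have term_less: "?R k * w ^ k < Q_abc a b c * (?e k * w ^ k)" for k
    using mult_strict_right_mono[OF hyp2F1_tail_less_Q_abc[OF assms(1-4)], of "w ^ k" k] assms(5)
    by (simp add: mult.assoc)
  have R_sums: "(\<lambda>k. ?R k * w ^ k) sums (\<Sum>k. ?R k * w ^ k)"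
    using assms by (intro summable_sums summable_series_tail_power summable_hyp2F1_coeff) auto
  have e_sums: "(\<lambda>k. Q_abc a b c * (?e k * w ^ k)) sums (Q_abc a b c * (1 - w) powr (- (a + b + 1 - c)))"
    using assms(5,6) by (intro sums_mult neg_binomial_series) simp
  show ?thesis
    by (rule sums_less[OF less_imp_le[OF term_less] term_less R_sums e_sums])
qed

theorem lemma5p2:
  fixes a b c w :: real
  assumes "0 < a" and "0 < b" and "a + b < c" and "c < a + b + 1"
    and "0 < w" and "w < 1"
  shows "0 < P_abc a b c - 1
    \<and> P_abc a b c - 1 < (P_abc a b c - hyp2F1 a b c w) / (1 - w) powr (c - a - b)
    \<and> (P_abc a b c - hyp2F1 a b c w) / (1 - w) powr (c - a - b) < Q_abc a b c"
proof -
  define X where "X = (\<Sum>k. series_tail (hyp2F1_coeff a b c) k * w ^ k)"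
  define Y where "Y = (1 - w) powr (- (a + b + 1 - c))"
  have "(1 - w) powr (c - a - b) = (1 - w) powr (1 + - (a + b + 1 - c))"
    by (rule arg_cong[where f = "\<lambda>x. (1 - w) powr x"]) simp
  then have "(1 - w) powr (c - a - b) = (1 - w) * Y"
    using assms unfolding Y_def powr_add by simp
  moreover have "P_abc a b c - hyp2F1 a b c w = (1 - w) * X"
    unfolding X_def using assms by (intro P_abc_minus_hyp2F1_eq) auto
  ultimately have ratio: "(P_abc a b c - hyp2F1 a b c w) / (1 - w) powr (c - a - b) = X / Y"
    using assms by simp
  have "0 < P_abc a b c - 1"
    using assms by (simp flip: hyp2F1_tail_0 add: series_tail_pos summable_hyp2F1_coeff hyp2F1_coeff_pos)
  moreover have "(P_abc a b c - 1) * Y < X"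
    unfolding X_def Y_def using assms by (rule hyp2F1_tail_power_series_gt)
  moreover have "X < Q_abc a b c * Y"
    unfolding X_def Y_def using assms by (rule hyp2F1_tail_power_series_less)
  moreover have "0 < Y"
    using assms by (simp add: Y_def)
  ultimately show ?thesis
    unfolding ratio by (simp add: pos_less_divide_eq pos_divide_less_eq)
qed

end
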